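(* Through four general points of $\mathbb{P}^2$ there pass exactly six Hesse configurations, i.e. there are exactly six Hesse configurations whose nine points include the four given points.
   Context: A Hesse configuration is a set of nine points in $\mathbb{P}^2$ that is the set of inflection points of a smooth plane cubic; equivalently, nine points together with twelve lines, each containing three of the points, such that the line through any two of the nine points contains a third one. *)

theory Defs
  imports "HOL-Analysis.Analysis"
begin

typedef P2 = "{L :: (complex^3) set. \<exists>v. v \<noteq> 0 \<and> L = {c *s v | c. True}}"
proof -
  have "(1 :: complex^3) \<noteq> 0" by simp
  then show ?thesis by blast
qed

definition det3 :: "complex^3 \<Rightarrow> complex^3 \<Rightarrow> complex^3 \<Rightarrow> complex" where
  "det3 u v w = det (\<chi> i. if i = 1 then u else if i = 2 then v else w :: complex^3^3)"

text \<open>Three points of P^2 are collinear iff nonzero representatives are linearly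
dependent (vanishing determinant); independent of the chosen representatives.\<close>
definition collinear_P2 :: "P2 \<Rightarrow> P2 \<Rightarrow> P2 \<Rightarrow> bool" where
  "collinear_P2 p q r \<longleftrightarrow>
     (\<exists>u v w. u \<in> Rep_P2 p \<and> v \<in> Rep_P2 q \<and> w \<in> Rep_P2 r \<and>
              u \<noteq> 0 \<and> v \<noteq> 0 \<and> w \<noteq> 0 \<and> det3 u v w = 0)"

text \<open>Hesse configuration: nine points such that the line through any two of them
contains exactly three of the nine points (hence twelve lines, each with three of
the points, and the line through any two points contains a third).\<close>
definition hesse_config :: "P2 set \<Rightarrow> bool" where
  "hesse_config S \<longleftrightarrow> finite S \<and> card S = 9 \<and>
     (\<forall>p\<in>S. \<forall>q\<in>S. p \<noteq> q \<longrightarrow> card {r\<in>S. collinear_P2 p q r} = 3)"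

end

theory Submission
  imports Defs
begin

text \<open>Choose coordinates in which the four points are \<open>[1:0:0], [0:1:0], [0:0:1], [1:1:1]\<close>.
  In a Hesse configuration \<open>S\<close> through them, each of the six lines joining two of the four points
  carries a third point of \<open>S\<close>. Only five points of \<open>S\<close> are left, so two of these third points
  coincide, which puts one of the diagonal points \<open>[1:1:0], [1:0:1], [0:1:1]\<close> into \<open>S\<close>; a
  second one cannot be in \<open>S\<close> as well. If \<open>[1:1:0] \<in> S\<close>, the fourth lines through the frame
  points force \<open>S\<close> to be the nine points of \<open>hesse_std p\<close> with \<open>p\<^sup>2 - p + 1 = 0\<close>. This leaves
  three choices of diagonal point times two roots; conversely all six candidates have coordinates in
  \<open>\<int>[\<zeta>]\<close>, where being a Hesse configuration is checked by exact integer arithmetic.\<close>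

section \<open>Homogeneous coordinates\<close>

definition vec3 :: "complex \<Rightarrow> complex \<Rightarrow> complex \<Rightarrow> complex^3" where
  "vec3 x y z = vector [x, y, z]"

lemma vec3_nth [simp]: "vec3 x y z $ 1 = x" "vec3 x y z $ 2 = y" "vec3 x y z $ 3 = z"
  by (simp_all add: vec3_def)

lemma complex3_eq_iff: "(u::complex^3) = v \<longleftrightarrow> u$1 = v$1 \<and> u$2 = v$2 \<and> u$3 = v$3"
  by (simp add: vec_eq_iff forall_3)

lemma vec3_eq_0_iff [simp]: "vec3 x y z = 0 \<longleftrightarrow> x = 0 \<and> y = 0 \<and> z = 0"
  by (simp add: complex3_eq_iff)

lemma vec3_eta: "vec3 (u$1) (u$2) (u$3) = u"
  by (simp add: complex3_eq_iff)

lemma complex3_nonzero_iff: "(v::complex^3) \<noteq> 0 \<longleftrightarrow> v$1 \<noteq> 0 \<or> v$2 \<noteq> 0 \<or> v$3 \<noteq> 0"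
  by (auto simp: complex3_eq_iff)

lemma det3_expand: "det3 u v w =
   u$1 * v$2 * w$3 - u$1 * v$3 * w$2 - u$2 * v$1 * w$3 + u$2 * v$3 * w$1 + u$3 * v$1 * w$2 - u$3 * v$2 * w$1"
  unfolding det3_def det_3 by (simp add: algebra_simps)

lemma det3_scale: "det3 (a *s u) (b *s v) (c *s w) = a * b * c * det3 u v w"
  by (simp add: det3_expand algebra_simps)

definition proportional :: "complex^3 \<Rightarrow> complex^3 \<Rightarrow> bool" where
  "proportional u v \<longleftrightarrow> u$1 * v$2 = u$2 * v$1 \<and> u$1 * v$3 = u$3 * v$1 \<and> u$2 * v$3 = u$3 * v$2"

lemma proportional_iff_scale:
  assumes "v \<noteq> 0"
  shows "proportional u v \<longleftrightarrow> (\<exists>c. u = c *s v)"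
proof
  assume uv: "proportional u v"
  consider "v$1 \<noteq> 0" | "v$2 \<noteq> 0" | "v$3 \<noteq> 0" using assms complex3_nonzero_iff by blast
  then show "\<exists>c. u = c *s v"
  proof cases
    case 1 with uv show ?thesis
      by (intro exI[of _ "u$1 / v$1"]) (auto simp: complex3_eq_iff proportional_def field_simps)
  next
    case 2 with uv show ?thesis
      by (intro exI[of _ "u$2 / v$2"]) (auto simp: complex3_eq_iff proportional_def field_simps)
  next
    case 3 with uv show ?thesis
      by (intro exI[of _ "u$3 / v$3"]) (auto simp: complex3_eq_iff proportional_def field_simps)
  qed
qed (auto simp: proportional_def)

definition pt :: "complex^3 \<Rightarrow> P2" where
  "pt v = Abs_P2 {c *s v | c. True}"

lemma Rep_P2_pt: "v \<noteq> 0 \<Longrightarrow> Rep_P2 (pt v) = {c *s v | c. True}"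
  unfolding pt_def by (rule Abs_P2_inverse) blast

lemma in_Rep_P2_pt: "v \<noteq> 0 \<Longrightarrow> v \<in> Rep_P2 (pt v)"
  by (auto simp: Rep_P2_pt intro!: exI[of _ 1])

lemma P2_cases:
  obtains v where "v \<noteq> 0" "p = pt v"
proof -
  obtain v where v: "v \<noteq> 0" "Rep_P2 p = {c *s v | c. True}"
    using Rep_P2[of p] by blast
  then have "p = pt v"
    unfolding pt_def by (metis Rep_P2_inverse)
  with v that show ?thesis by blast
qed

lemma pt_eq_iff:
  assumes "u \<noteq> 0" "v \<noteq> 0"
  shows "pt u = pt v \<longleftrightarrow> proportional u v"
proof
  assume "pt u = pt v"
  then have "u \<in> Rep_P2 (pt v)"
    using in_Rep_P2_pt[OF assms(1)] by simp
  then show "proportional u v"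
    using Rep_P2_pt[OF assms(2)] proportional_iff_scale[OF assms(2)] by auto
next
  assume "proportional u v"
  then obtain c where c: "u = c *s v"
    using proportional_iff_scale[OF assms(2)] by blast
  with assms have "c \<noteq> 0" by auto
  have "{k *s u | k. True} = {k *s v | k. True}"
  proof (intro set_eqI iffI)
    fix x assume "x \<in> {k *s u | k. True}"
    then obtain k where "x = (k * c) *s v" using c by auto
    then show "x \<in> {k *s v | k. True}" by blast
  next
    fix x assume "x \<in> {k *s v | k. True}"
    then obtain k where "x = (k / c) *s u"
      using c \<open>c \<noteq> 0\<close> by (auto simp: vec_eq_iff)
    then show "x \<in> {k *s u | k. True}" by blast
  qed
  then show "pt u = pt v" unfolding pt_def by simp
qed

lemma pt_scale: "c \<noteq> 0 \<Longrightarrow> v \<noteq> 0 \<Longrightarrow> pt (c *s v) = pt v"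
  by (simp add: pt_eq_iff proportional_def)

lemma collinear_P2_pt_iff:
  assumes "u \<noteq> 0" "v \<noteq> 0" "w \<noteq> 0"
  shows "collinear_P2 (pt u) (pt v) (pt w) \<longleftrightarrow> det3 u v w = 0"
proof
  assume "collinear_P2 (pt u) (pt v) (pt w)"
  then obtain u' v' w' where reps: "u' \<in> Rep_P2 (pt u)" "v' \<in> Rep_P2 (pt v)" "w' \<in> Rep_P2 (pt w)"
    and nz: "u' \<noteq> 0" "v' \<noteq> 0" "w' \<noteq> 0" and "det3 u' v' w' = 0"
    unfolding collinear_P2_def by blast
  moreover obtain a b c where "u' = a *s u" "v' = b *s v" "w' = c *s w"
    using reps Rep_P2_pt assms by auto
  ultimately show "det3 u v w = 0"
    by (auto simp: det3_scale)
next
  assume "det3 u v w = 0"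
  then show "collinear_P2 (pt u) (pt v) (pt w)"
    unfolding collinear_P2_def using assms in_Rep_P2_pt by blast
qed

lemma collinear_P2_swap12: "collinear_P2 p q r \<Longrightarrow> collinear_P2 q p r"
  and collinear_P2_swap23: "collinear_P2 p q r \<Longrightarrow> collinear_P2 p r q"
proof -
  obtain u where "u \<noteq> 0" "p = pt u" by (rule P2_cases)
  moreover obtain v where "v \<noteq> 0" "q = pt v" by (rule P2_cases)
  moreover obtain w where "w \<noteq> 0" "r = pt w" by (rule P2_cases)
  ultimately show "collinear_P2 p q r \<Longrightarrow> collinear_P2 q p r" "collinear_P2 p q r \<Longrightarrow> collinear_P2 p r q"
    by (auto simp: collinear_P2_pt_iff det3_expand algebra_simps)
qed

lemma collinear_P2_perms:
  "collinear_P2 p q r \<Longrightarrow> collinear_P2 q r p" "collinear_P2 p q r \<Longrightarrow> collinear_P2 r p q"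
  "collinear_P2 p q r \<Longrightarrow> collinear_P2 r q p"
  by (meson collinear_P2_swap12 collinear_P2_swap23)+

lemma collinear_P2_repeated: "collinear_P2 p p q" "collinear_P2 p q p" "collinear_P2 q p p"
proof -
  obtain u where "u \<noteq> 0" "p = pt u" by (rule P2_cases)
  moreover obtain v where "v \<noteq> 0" "q = pt v" by (rule P2_cases)
  ultimately show "collinear_P2 p p q" "collinear_P2 p q p" "collinear_P2 q p p"
    by (auto simp: collinear_P2_pt_iff det3_expand algebra_simps)
qed

text \<open>With \<open>n = u \<times> v\<close>, the identity \<open>det3 x y z \<cdot> n = (n\<cdot>x)(y \<times> z) + (n\<cdot>y)(z \<times> x) + (n\<cdot>z)(x \<times> y)\<close>
  shows that \<open>x, y, z\<close> are dependent once all three are orthogonal to \<open>n \<noteq> 0\<close>.\<close>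
lemma det3_eq_0_on_line:
  assumes "\<not> proportional u v" "det3 u v x = 0" "det3 u v y = 0" "det3 u v z = 0"
  shows "det3 x y z = 0"
proof -
  define n1 where "n1 = u$2 * v$3 - u$3 * v$2"
  define n2 where "n2 = u$3 * v$1 - u$1 * v$3"
  define n3 where "n3 = u$1 * v$2 - u$2 * v$1"
  have det_uv: "det3 u v w = n1 * w$1 + n2 * w$2 + n3 * w$3" for w
    unfolding n1_def n2_def n3_def det3_expand by (simp add: algebra_simps)
  have "n1 \<noteq> 0 \<or> n2 \<noteq> 0 \<or> n3 \<noteq> 0"
    using assms(1) unfolding n1_def n2_def n3_def proportional_def by (auto simp: algebra_simps)
  moreover have "det3 x y z * n1 = det3 u v x * (y$2*z$3 - y$3*z$2)
       + det3 u v y * (z$2*x$3 - z$3*x$2) + det3 u v z * (x$2*y$3 - x$3*y$2)"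
    and "det3 x y z * n2 = det3 u v x * (y$3*z$1 - y$1*z$3)
       + det3 u v y * (z$3*x$1 - z$1*x$3) + det3 u v z * (x$3*y$1 - x$1*y$3)"
    and "det3 x y z * n3 = det3 u v x * (y$1*z$2 - y$2*z$1)
       + det3 u v y * (z$1*x$2 - z$2*x$1) + det3 u v z * (x$1*y$2 - x$2*y$1)"
    unfolding det_uv by (simp_all add: det3_expand algebra_simps)
  ultimately show ?thesis
    using assms(2-4) by auto
qed

lemma collinear_P2_on_line:
  assumes "p \<noteq> q" "collinear_P2 p q x" "collinear_P2 p q y" "collinear_P2 p q z"
  shows "collinear_P2 x y z"
proof -
  obtain u where u: "u \<noteq> 0" "p = pt u" by (rule P2_cases)
  obtain v where v: "v \<noteq> 0" "q = pt v" by (rule P2_cases)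
  obtain a where a: "a \<noteq> 0" "x = pt a" by (rule P2_cases)
  obtain b where b: "b \<noteq> 0" "y = pt b" by (rule P2_cases)
  obtain c where c: "c \<noteq> 0" "z = pt c" by (rule P2_cases)
  have "\<not> proportional u v"
    using assms(1) pt_eq_iff u v by blast
  then show ?thesis
    using assms(2-4) det3_eq_0_on_line[of u v a b c] u v a b c by (simp add: collinear_P2_pt_iff)
qed

lemma collinear_P2_lines_meet:
  assumes "\<not> collinear_P2 p q r" "collinear_P2 p q x" "collinear_P2 p r x"
  shows "x = p"
proof (rule ccontr)
  assume "x \<noteq> p"
  have "collinear_P2 p x q" "collinear_P2 p x r"
    using assms(2,3) by (simp_all add: collinear_P2_swap23)
  then have "collinear_P2 q r p"
    using collinear_P2_on_line[of p x q r p] \<open>x \<noteq> p\<close> collinear_P2_repeated by metis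
  with assms(1) show False
    using collinear_P2_perms by blast
qed

section \<open>Projective frames\<close>

definition lincomb3 :: "complex^3 \<Rightarrow> complex^3 \<Rightarrow> complex^3 \<Rightarrow> complex^3 \<Rightarrow> complex^3" where
  "lincomb3 A B C x = x$1 *s A + x$2 *s B + x$3 *s C"

definition frame_pt :: "complex^3 \<Rightarrow> complex^3 \<Rightarrow> complex^3 \<Rightarrow> complex^3 \<Rightarrow> P2" where
  "frame_pt A B C x = pt (lincomb3 A B C x)"

lemma lincomb3_nth: "lincomb3 A B C x $ i = x$1 * A$i + x$2 * B$i + x$3 * C$i"
  by (simp add: lincomb3_def)

lemma lincomb3_scale: "lincomb3 A B C (c *s x) = c *s lincomb3 A B C x"
  by (simp add: lincomb3_def algebra_simps)

lemma det3_lincomb3: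
  "det3 (lincomb3 A B C x) (lincomb3 A B C y) (lincomb3 A B C z) = det3 A B C * det3 x y z"
  unfolding det3_expand lincomb3_nth by (simp add: algebra_simps)

lemma lincomb3_cramer:
  "lincomb3 A B C (vec3 (det3 v B C) (det3 A v C) (det3 A B v)) = det3 A B C *s v"
  unfolding complex3_eq_iff lincomb3_nth by (simp add: det3_expand algebra_simps)

lemma lincomb3_eq_0_iff:
  assumes "det3 A B C \<noteq> 0"
  shows "lincomb3 A B C x = 0 \<longleftrightarrow> x = 0"
proof
  assume "lincomb3 A B C x = 0"
  moreover have "det3 (lincomb3 A B C x) B C = x$1 * det3 A B C"
    and "det3 A (lincomb3 A B C x) C = x$2 * det3 A B C"
    and "det3 A B (lincomb3 A B C x) = x$3 * det3 A B C"
    unfolding det3_expand lincomb3_nth by (simp_all add: algebra_simps)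
  ultimately show "x = 0"
    using assms by (auto simp: det3_expand complex3_eq_iff)
qed (simp add: lincomb3_def)

lemma frame_pt_eq_iff:
  assumes "det3 A B C \<noteq> 0" "x \<noteq> 0" "y \<noteq> 0"
  shows "frame_pt A B C x = frame_pt A B C y \<longleftrightarrow> proportional x y"
proof -
  have "frame_pt A B C x = frame_pt A B C y \<longleftrightarrow> (\<exists>c. lincomb3 A B C x = c *s lincomb3 A B C y)"
    using assms by (simp add: frame_pt_def pt_eq_iff proportional_iff_scale lincomb3_eq_0_iff)
  also have "\<dots> \<longleftrightarrow> (\<exists>c. x = c *s y)"
  proof -
    have "lincomb3 A B C x - c *s lincomb3 A B C y = lincomb3 A B C (x - c *s y)" for c
      by (simp add: lincomb3_def vec_eq_iff algebra_simps)
    then show ?thesis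
      using lincomb3_eq_0_iff[OF assms(1)] by (metis eq_iff_diff_eq_0)
  qed
  finally show ?thesis
    using proportional_iff_scale assms by blast
qed

lemma collinear_frame_pt_iff:
  assumes "det3 A B C \<noteq> 0" "x \<noteq> 0" "y \<noteq> 0" "z \<noteq> 0"
  shows "collinear_P2 (frame_pt A B C x) (frame_pt A B C y) (frame_pt A B C z) \<longleftrightarrow> det3 x y z = 0"
  using assms by (simp add: frame_pt_def collinear_P2_pt_iff lincomb3_eq_0_iff det3_lincomb3)

lemma frame_pt_surj:
  assumes "det3 A B C \<noteq> 0"
  obtains x where "x \<noteq> 0" "p = frame_pt A B C x"
proof -
  obtain v where v: "v \<noteq> 0" "p = pt v" by (rule P2_cases)
  define x where "x = (1 / det3 A B C) *s vec3 (det3 v B C) (det3 A v C) (det3 A B v)"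
  have "lincomb3 A B C x = v"
    using assms by (simp add: x_def lincomb3_scale lincomb3_cramer)
  with v assms have "x \<noteq> 0" "p = frame_pt A B C x"
    by (auto simp: frame_pt_def lincomb3_def)
  with that show ?thesis by blast
qed

text \<open>Relabelling the frame permutes the coordinates. The swaps loop as generic rewrite rules,
  so they are only used instantiated to a fixed frame.\<close>
lemma frame_pt_swap23: "frame_pt A C B (vec3 x y z) = frame_pt A B C (vec3 x z y)"
  and frame_pt_swap12: "frame_pt B A C (vec3 x y z) = frame_pt A B C (vec3 y x z)"
  and frame_pt_rotate: "frame_pt B C A (vec3 x y z) = frame_pt A B C (vec3 z x y)"
  by (simp_all add: frame_pt_def lincomb3_def algebra_simps)

lemma det3_swap23: "det3 A C B = - det3 A B C"
  and det3_swap12: "det3 B A C = - det3 A B C"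
  and det3_rotate: "det3 B C A = det3 A B C"
  by (simp_all add: det3_expand algebra_simps)

text \<open>Rescaling representatives of \<open>a, b, c\<close> by the Cramer coefficients of \<open>d\<close>
  makes \<open>d\<close> the unit point.\<close>
lemma projective_frame_exists:
  assumes "\<not> collinear_P2 a b c" "\<not> collinear_P2 a b d" "\<not> collinear_P2 a c d" "\<not> collinear_P2 b c d"
  obtains A B C where "det3 A B C \<noteq> 0"
    "frame_pt A B C (vec3 1 0 0) = a" "frame_pt A B C (vec3 0 1 0) = b"
    "frame_pt A B C (vec3 0 0 1) = c" "frame_pt A B C (vec3 1 1 1) = d"
proof -
  obtain u where u: "u \<noteq> 0" "a = pt u" by (rule P2_cases)
  obtain v where v: "v \<noteq> 0" "b = pt v" by (rule P2_cases)
  obtain w where w: "w \<noteq> 0" "c = pt w" by (rule P2_cases)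
  obtain t where t: "t \<noteq> 0" "d = pt t" by (rule P2_cases)
  have "\<not> collinear_P2 a d c" "\<not> collinear_P2 d b c"
    using assms(3,4) collinear_P2_swap23 collinear_P2_perms(1) by blast+
  then have nz: "det3 u v w \<noteq> 0" "det3 u v t \<noteq> 0" "det3 u t w \<noteq> 0" "det3 t v w \<noteq> 0"
    using assms(1,2) u v w t by (simp_all add: collinear_P2_pt_iff)
  define A where "A = det3 t v w *s u"
  define B where "B = det3 u t w *s v"
  define C where "C = det3 u v t *s w"
  have "det3 A B C \<noteq> 0"
    using nz by (simp add: A_def B_def C_def det3_scale)
  moreover have "frame_pt A B C (vec3 1 0 0) = a" "frame_pt A B C (vec3 0 1 0) = b"
    "frame_pt A B C (vec3 0 0 1) = c"
    using nz u v w by (simp_all add: frame_pt_def lincomb3_def A_def B_def C_def pt_scale)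
  moreover have "lincomb3 A B C (vec3 1 1 1) = det3 u v w *s t"
    using lincomb3_cramer[of u v w t] by (simp add: lincomb3_def A_def B_def C_def)
  then have "frame_pt A B C (vec3 1 1 1) = d"
    using nz t by (simp add: frame_pt_def pt_scale)
  ultimately show ?thesis
    using that by blast
qed

section \<open>Incidences in a Hesse configuration\<close>

lemma hesse_config_finite: "hesse_config S \<Longrightarrow> finite S"
  and hesse_config_card: "hesse_config S \<Longrightarrow> card S = 9"
  by (simp_all add: hesse_config_def)

lemma hesse_config_card_Diff: "hesse_config S \<Longrightarrow> F \<subseteq> S \<Longrightarrow> card (S - F) = 9 - card F"
  by (simp add: hesse_config_def card_Diff_subset finite_subset)

lemma hesse_config_eq_set:
  assumes "hesse_config S" "set xs \<subseteq> S" "distinct xs" "length xs = 9"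
  shows "S = set xs"
  using card_subset_eq[OF hesse_config_finite[OF assms(1)] assms(2)] hesse_config_card[OF assms(1)]
    distinct_card[OF assms(3)] assms(4) by simp

lemma hesse_third_point:
  assumes "hesse_config S" "p \<in> S" "q \<in> S" "p \<noteq> q"
  obtains r where "r \<in> S" "r \<noteq> p" "r \<noteq> q" "collinear_P2 p q r"
proof -
  have "card {r\<in>S. collinear_P2 p q r} = 3"
    using assms unfolding hesse_config_def by blast
  moreover have "card {p, q} \<le> 2"
    by (simp add: card_insert_if)
  ultimately have "\<not> {r\<in>S. collinear_P2 p q r} \<subseteq> {p, q}"
    using card_mono[of "{p, q}" "{r\<in>S. collinear_P2 p q r}"] by auto
  then show ?thesis
    using that by blast
qed

lemma hesse_line:
  assumes "hesse_config S" "p \<in> S" "q \<in> S" "r \<in> S" "distinct [p, q, r]" "collinear_P2 p q r"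
  shows "{s\<in>S. collinear_P2 p q s} = {p, q, r}"
proof -
  have sub: "{p, q, r} \<subseteq> {s\<in>S. collinear_P2 p q s}"
    using assms collinear_P2_repeated by auto
  have "finite {s\<in>S. collinear_P2 p q s}"
    using hesse_config_finite[OF assms(1)] by simp
  moreover have "card {s\<in>S. collinear_P2 p q s} = 3" "card {p, q, r} = 3"
    using assms unfolding hesse_config_def by auto
  ultimately show ?thesis
    using card_subset_eq[OF _ sub] by simp
qed

text \<open>Each of the four lines through \<open>P\<close> carries two further points of \<open>S\<close>; knowing three of
  them, the two points of \<open>S\<close> left over span the fourth.\<close>
lemma hesse_fourth_line:
  assumes H: "hesse_config S"
    and K: "set [P, x1, y1, x2, y2, x3, y3] \<subseteq> S" "distinct [P, x1, y1, x2, y2, x3, y3]"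
    and lines: "collinear_P2 P x1 y1" "collinear_P2 P x2 y2" "collinear_P2 P x3 y3"
    and uv: "u \<in> S - set [P, x1, y1, x2, y2, x3, y3]" "v \<in> S - set [P, x1, y1, x2, y2, x3, y3]" "u \<noteq> v"
  shows "collinear_P2 P u v"
proof -
  let ?K = "set [P, x1, y1, x2, y2, x3, y3]"
  have off_line: "\<not> collinear_P2 P x u" if "collinear_P2 P x y" "x \<in> ?K" "y \<in> ?K" "distinct [P, x, y]" for x y
    using hesse_line[OF H, of P x y] that K(1) uv(1) by auto
  obtain w where w: "w \<in> S" "w \<noteq> P" "w \<noteq> u" "collinear_P2 P u w"
    using hesse_third_point[OF H, of P u] K uv by auto
  have partner: "\<exists>y\<in>?K. distinct [P, x, y] \<and> collinear_P2 P x y" if "x \<in> ?K - {P}" for x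
    using that K(2) lines collinear_P2_swap23 by auto
  have "collinear_P2 P w u"
    using w(4) collinear_P2_swap23 by blast
  then have "w \<notin> ?K"
    using w(2) partner off_line by blast
  have "S - ?K = {u, v}"
  proof (rule card_subset_eq[symmetric])
    show "finite (S - ?K)" "{u, v} \<subseteq> S - ?K"
      using hesse_config_finite[OF H] uv by auto
    show "card {u, v} = card (S - ?K)"
      using hesse_config_card_Diff[OF H K(1)] distinct_card[OF K(2)] uv(3) by simp
  qed
  then have "w = v"
    using w(1,3) \<open>w \<notin> ?K\<close> by blast
  with w show ?thesis by simp
qed

definition general_position :: "P2 set \<Rightarrow> bool" where
  "general_position F \<longleftrightarrow> (\<forall>x\<in>F. \<forall>y\<in>F. \<forall>z\<in>F. distinct [x, y, z] \<longrightarrow> \<not> collinear_P2 x y z)"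

lemma general_position_four:
  assumes "\<not> collinear_P2 a b c" "\<not> collinear_P2 a b d" "\<not> collinear_P2 a c d" "\<not> collinear_P2 b c d"
  shows "general_position {a, b, c, d}"
  unfolding general_position_def using assms collinear_P2_swap12 collinear_P2_swap23
  by (smt (verit) distinct_length_2_or_more insertE singletonD)

lemma hesse_third_point_outside:
  assumes H: "hesse_config S" and F: "F \<subseteq> S" "general_position F"
    and xy: "x \<in> F" "y \<in> F" "x \<noteq> y"
  obtains t where "t \<in> S - F" "collinear_P2 x y t" "collinear_P2 y x t"
proof -
  have "x \<in> S" "y \<in> S"
    using F(1) xy by auto
  then obtain t where t: "t \<in> S" "t \<noteq> x" "t \<noteq> y" "collinear_P2 x y t"
    by (rule hesse_third_point[OF H _ _ xy(3)])
  moreover have "t \<notin> F"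
    using F(2) xy t unfolding general_position_def by auto
  ultimately show ?thesis
    using that collinear_P2_swap12 by blast
qed

lemma third_points_distinct:
  assumes "general_position F" "v \<in> F" "p \<in> F" "q \<in> F" "distinct [v, p, q]"
    and "collinear_P2 v p t" "collinear_P2 v q t'" "t \<notin> F"
  shows "t \<noteq> t'"
  using assms collinear_P2_lines_meet[of v p q t] unfolding general_position_def by auto

section \<open>Hesse configurations through the standard frame\<close>

text \<open>The unique Hesse configuration through the frame that contains \<open>[1:1:0]\<close>, once the
  parameter \<open>p\<close> is a root of \<open>p\<^sup>2 - p + 1\<close>, i.e. a primitive sixth root of unity.\<close>
definition hesse_std :: "complex \<Rightarrow> (complex^3) set" where
  "hesse_std p = {vec3 1 0 0, vec3 0 1 0, vec3 0 0 1, vec3 1 1 1, vec3 1 1 0,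
     vec3 1 0 (1 - p), vec3 1 (1 - p) 1, vec3 p 1 1, vec3 0 1 p}"

lemma hesse_std_parameter_equations:
  fixes s t p r :: "'a::field"
  assumes "t * r = 1" "s * p = 1" "t * p = 1" "r + s = 1"
  shows "r = p" "s = 1 - p" "t = 1 - p" "p\<^sup>2 - p + 1 = 0"
proof -
  show "r = p"
    using assms(1,3) by (metis mult_left_cancel mult_zero_left zero_neq_one)
  then show s: "s = 1 - p"
    using assms(4) by (simp add: eq_diff_eq add.commute)
  show "t = 1 - p"
    using assms(2,3) s by (metis mult_right_cancel mult_zero_right zero_neq_one)
  have "p\<^sup>2 - p + 1 = 1 - s * p"
    unfolding s by (simp add: power2_eq_square algebra_simps)
  with assms(2) show "p\<^sup>2 - p + 1 = 0"
    by simp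
qed

context
  fixes A B C :: "complex^3"
  assumes nondeg: "det3 A B C \<noteq> 0"
begin

abbreviation proj :: "complex \<Rightarrow> complex \<Rightarrow> complex \<Rightarrow> P2" where
  "proj x y z \<equiv> frame_pt A B C (vec3 x y z)"

lemma proj_eq_iff:
  "vec3 x1 x2 x3 \<noteq> 0 \<Longrightarrow> vec3 y1 y2 y3 \<noteq> 0 \<Longrightarrow>
    proj x1 x2 x3 = proj y1 y2 y3 \<longleftrightarrow> x1 * y2 = x2 * y1 \<and> x1 * y3 = x3 * y1 \<and> x2 * y3 = x3 * y2"
  by (simp add: frame_pt_eq_iff[OF nondeg] proportional_def)

lemma collinear_proj_iff:
  "vec3 x1 x2 x3 \<noteq> 0 \<Longrightarrow> vec3 y1 y2 y3 \<noteq> 0 \<Longrightarrow> vec3 z1 z2 z3 \<noteq> 0 \<Longrightarrow>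
    collinear_P2 (proj x1 x2 x3) (proj y1 y2 y3) (proj z1 z2 z3) \<longleftrightarrow>
    x1 * y2 * z3 - x1 * y3 * z2 - x2 * y1 * z3 + x2 * y3 * z1 + x3 * y1 * z2 - x3 * y2 * z1 = 0"
  by (simp add: collinear_frame_pt_iff[OF nondeg] det3_expand)

lemma proj_cases:
  obtains x1 x2 x3 where "vec3 x1 x2 x3 \<noteq> 0" "p = proj x1 x2 x3"
  using frame_pt_surj[OF nondeg, of p] vec3_eta by metis

lemma meet_ab_cd:
  assumes "collinear_P2 (proj 1 0 0) (proj 0 1 0) X" "collinear_P2 (proj 0 0 1) (proj 1 1 1) X"
  shows "X = proj 1 1 0"
proof -
  obtain x1 x2 x3 where x: "vec3 x1 x2 x3 \<noteq> 0" "X = proj x1 x2 x3" by (rule proj_cases)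
  have "x3 = 0"
    using assms(1) unfolding x(2) by (simp add: collinear_proj_iff[OF _ _ x(1)])
  moreover have "x1 = x2"
    using assms(2) unfolding x(2) by (simp add: collinear_proj_iff[OF _ _ x(1)])
  ultimately show ?thesis
    unfolding x(2) by (subst proj_eq_iff[OF x(1)]) simp_all
qed

lemma meet_ac_bd:
  assumes "collinear_P2 (proj 1 0 0) (proj 0 0 1) X" "collinear_P2 (proj 0 1 0) (proj 1 1 1) X"
  shows "X = proj 1 0 1"
proof -
  obtain x1 x2 x3 where x: "vec3 x1 x2 x3 \<noteq> 0" "X = proj x1 x2 x3" by (rule proj_cases)
  have "x2 = 0"
    using assms(1) unfolding x(2) by (simp add: collinear_proj_iff[OF _ _ x(1)])
  moreover have "x1 = x3"
    using assms(2) unfolding x(2) by (simp add: collinear_proj_iff[OF _ _ x(1)])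
  ultimately show ?thesis
    unfolding x(2) by (subst proj_eq_iff[OF x(1)]) simp_all
qed

lemma meet_ad_bc:
  assumes "collinear_P2 (proj 1 0 0) (proj 1 1 1) X" "collinear_P2 (proj 0 1 0) (proj 0 0 1) X"
  shows "X = proj 0 1 1"
proof -
  obtain x1 x2 x3 where x: "vec3 x1 x2 x3 \<noteq> 0" "X = proj x1 x2 x3" by (rule proj_cases)
  have "x2 = x3"
    using assms(1) unfolding x(2) by (simp add: collinear_proj_iff[OF _ _ x(1)])
  moreover have "x1 = 0"
    using assms(2) unfolding x(2) by (simp add: collinear_proj_iff[OF _ _ x(1)])
  ultimately show ?thesis
    unfolding x(2) by (subst proj_eq_iff[OF x(1)]) simp_all
qed

lemma line_ac_point:
  assumes "collinear_P2 (proj 1 0 0) (proj 0 0 1) X" "X \<noteq> proj 0 0 1"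
  obtains s where "X = proj 1 0 s"
proof -
  obtain x1 x2 x3 where x: "vec3 x1 x2 x3 \<noteq> 0" "X = proj x1 x2 x3" by (rule proj_cases)
  have "x2 = 0"
    using assms(1) unfolding x(2) by (simp add: collinear_proj_iff[OF _ _ x(1)])
  moreover have "x1 \<noteq> 0"
  proof
    assume "x1 = 0"
    with x(1) \<open>x2 = 0\<close> have "X = proj 0 0 1"
      unfolding x(2) by (subst proj_eq_iff) auto
    with assms(2) show False ..
  qed
  ultimately have "X = proj 1 0 (x3 / x1)"
    unfolding x(2) by (subst proj_eq_iff[OF x(1)]) simp_all
  then show ?thesis
    using that by blast
qed

lemma line_bd_point:
  assumes "collinear_P2 (proj 0 1 0) (proj 1 1 1) X" "X \<noteq> proj 0 1 0"
  obtains t where "X = proj 1 t 1"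
proof -
  obtain x1 x2 x3 where x: "vec3 x1 x2 x3 \<noteq> 0" "X = proj x1 x2 x3" by (rule proj_cases)
  have "x1 = x3"
    using assms(1) unfolding x(2) by (simp add: collinear_proj_iff[OF _ _ x(1)])
  moreover have "x1 \<noteq> 0"
  proof
    assume "x1 = 0"
    with x(1) \<open>x1 = x3\<close> have "X = proj 0 1 0"
      unfolding x(2) by (subst proj_eq_iff) auto
    with assms(2) show False ..
  qed
  ultimately have "X = proj 1 (x2 / x1) 1"
    unfolding x(2) by (subst proj_eq_iff[OF x(1)]) simp_all
  then show ?thesis
    using that by blast
qed

lemma line_ad_point:
  assumes "collinear_P2 (proj 1 0 0) (proj 1 1 1) X" "X \<noteq> proj 1 0 0"
  obtains p where "X = proj p 1 1"
proof -
  obtain x1 x2 x3 where x: "vec3 x1 x2 x3 \<noteq> 0" "X = proj x1 x2 x3" by (rule proj_cases)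
  have "x2 = x3"
    using assms(1) unfolding x(2) by (simp add: collinear_proj_iff[OF _ _ x(1)])
  moreover have "x2 \<noteq> 0"
  proof
    assume "x2 = 0"
    with x(1) \<open>x2 = x3\<close> have "X = proj 1 0 0"
      unfolding x(2) by (subst proj_eq_iff) auto
    with assms(2) show False ..
  qed
  ultimately have "X = proj (x1 / x2) 1 1"
    unfolding x(2) by (subst proj_eq_iff[OF x(1)]) simp_all
  then show ?thesis
    using that by blast
qed

lemma line_bc_point:
  assumes "collinear_P2 (proj 0 1 0) (proj 0 0 1) X" "X \<noteq> proj 0 0 1"
  obtains r where "X = proj 0 1 r"
proof -
  obtain x1 x2 x3 where x: "vec3 x1 x2 x3 \<noteq> 0" "X = proj x1 x2 x3" by (rule proj_cases)
  have "x1 = 0"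
    using assms(1) unfolding x(2) by (simp add: collinear_proj_iff[OF _ _ x(1)])
  moreover have "x2 \<noteq> 0"
  proof
    assume "x2 = 0"
    with x(1) \<open>x1 = 0\<close> have "X = proj 0 0 1"
      unfolding x(2) by (subst proj_eq_iff) auto
    with assms(2) show False ..
  qed
  ultimately have "X = proj 0 1 (x3 / x2)"
    unfolding x(2) by (subst proj_eq_iff[OF x(1)]) simp_all
  then show ?thesis
    using that by blast
qed

lemma general_position_frame: "general_position {proj 1 0 0, proj 0 1 0, proj 0 0 1, proj 1 1 1}"
  by (rule general_position_four) (simp_all add: collinear_proj_iff)

lemma diagonal_point_in_hesse:
  assumes H: "hesse_config S"
    and frame: "{proj 1 0 0, proj 0 1 0, proj 0 0 1, proj 1 1 1} \<subseteq> S"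
  shows "proj 1 1 0 \<in> S \<or> proj 1 0 1 \<in> S \<or> proj 0 1 1 \<in> S"
proof (rule ccontr)
  assume no_diagonal: "\<not> ?thesis"
  define a b c d where "a = proj 1 0 0" and "b = proj 0 1 0" and "c = proj 0 0 1" and "d = proj 1 1 1"
  let ?F = "{a, b, c, d}"
  have F: "?F \<subseteq> S" "general_position ?F" and "distinct [a, b, c, d]"
    using frame general_position_frame by (simp_all add: a_def b_def c_def d_def proj_eq_iff)
  then have ne: "a \<noteq> b" "a \<noteq> c" "a \<noteq> d" "b \<noteq> c" "b \<noteq> d" "c \<noteq> d"
    "b \<noteq> a" "c \<noteq> a" "d \<noteq> a" "c \<noteq> b" "d \<noteq> b" "d \<noteq> c"
    by auto
  note third = hesse_third_point_outside[OF H F]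
  obtain tab where tab: "tab \<in> S - ?F" "collinear_P2 a b tab" "collinear_P2 b a tab"
    using third[of a b] ne by blast
  obtain tac where tac: "tac \<in> S - ?F" "collinear_P2 a c tac" "collinear_P2 c a tac"
    using third[of a c] ne by blast
  obtain tad where tad: "tad \<in> S - ?F" "collinear_P2 a d tad" "collinear_P2 d a tad"
    using third[of a d] ne by blast
  obtain tbc where tbc: "tbc \<in> S - ?F" "collinear_P2 b c tbc" "collinear_P2 c b tbc"
    using third[of b c] ne by blast
  obtain tbd where tbd: "tbd \<in> S - ?F" "collinear_P2 b d tbd" "collinear_P2 d b tbd"
    using third[of b d] ne by blast
  obtain tcd where tcd: "tcd \<in> S - ?F" "collinear_P2 c d tcd" "collinear_P2 d c tcd"
    using third[of c d] ne by blast
  note t = tab tac tad tbc tbd tcd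
  note vertex = third_points_distinct[OF F(2)]
  have "distinct [tab, tac, tad]" "distinct [tab, tbc, tbd]" "distinct [tac, tbc, tcd]" "distinct [tad, tbd, tcd]"
    using ne t vertex[of a b c tab tac] vertex[of a b d tab tad] vertex[of a c d tac tad]
      vertex[of b a c tab tbc] vertex[of b a d tab tbd] vertex[of b c d tbc tbd]
      vertex[of c a b tac tbc] vertex[of c a d tac tcd] vertex[of c b d tbc tcd]
      vertex[of d a b tad tbd] vertex[of d a c tad tcd] vertex[of d b c tbd tcd]
    by simp_all
  moreover have "tab \<noteq> tcd" "tac \<noteq> tbd" "tad \<noteq> tbc"
    using meet_ab_cd[of tab] meet_ac_bd[of tac] meet_ad_bc[of tad] t no_diagonal
    unfolding a_def b_def c_def d_def by auto
  ultimately have "card {tab, tac, tad, tbc, tbd, tcd} = 6"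
    by (simp add: card_insert_if)
  moreover have "{tab, tac, tad, tbc, tbd, tcd} \<subseteq> S - ?F"
    using t by blast
  then have "card {tab, tac, tad, tbc, tbd, tcd} \<le> card (S - ?F)"
    using hesse_config_finite[OF H] by (simp add: card_mono)
  moreover have "card (S - ?F) = 5"
    using hesse_config_card_Diff[OF H F(1)] ne by (simp add: card_insert_if)
  ultimately show False
    by simp
qed

lemma not_two_diagonal_points:
  assumes H: "hesse_config S"
    and frame: "{proj 1 0 0, proj 0 1 0, proj 0 0 1, proj 1 1 1} \<subseteq> S"
    and X: "proj 1 1 0 \<in> S"
  shows "proj 1 0 1 \<notin> S"
proof
  assume Y: "proj 1 0 1 \<in> S"
  define a b c d X Y where "a = proj 1 0 0" and "b = proj 0 1 0" and "c = proj 0 0 1"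
    and "d = proj 1 1 1" and "X = proj 1 1 0" and "Y = proj 1 0 1"
  note defs = a_def b_def c_def d_def X_def Y_def
  have "X \<noteq> Y"
    by (simp add: defs proj_eq_iff)
  moreover have "X \<in> S" "Y \<in> S"
    using X Y unfolding defs .
  ultimately obtain w where w: "w \<in> S" "w \<noteq> X" "w \<noteq> Y" "collinear_P2 X Y w"
    by (metis hesse_third_point[OF H])
  have "\<not> collinear_P2 X Y a" "\<not> collinear_P2 X Y b" "\<not> collinear_P2 X Y c" "\<not> collinear_P2 X Y d"
    by (simp_all add: defs collinear_proj_iff)
  with w have dist: "distinct [X, a, b, c, d, Y, w]"
    by (auto simp: defs proj_eq_iff)
  have K: "set [X, a, b, c, d, Y, w] \<subseteq> S"
    using frame X Y w(1) unfolding defs by simp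
  have "card (S - set [X, a, b, c, d, Y, w]) = 2"
    using hesse_config_card_Diff[OF H K] distinct_card[OF dist] by simp
  then obtain u v where uv: "S - set [X, a, b, c, d, Y, w] = {u, v}" "u \<noteq> v"
    by (meson card_2_iff)
  have lines: "collinear_P2 X a b" "collinear_P2 X c d" "collinear_P2 Y a c" "collinear_P2 Y b d"
    by (simp_all add: defs collinear_proj_iff)
  have "collinear_P2 X u v"
    using hesse_fourth_line[OF H, of X a b c d Y w u v] lines w(4) uv dist K by auto
  moreover have "collinear_P2 Y u v"
    using hesse_fourth_line[OF H, of Y a c b d X w u v] lines collinear_P2_swap12[OF w(4)] uv dist K
    by (auto simp: insert_commute)
  ultimately have "collinear_P2 u v X" "collinear_P2 u v Y"
    using collinear_P2_perms(1) by blast+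
  then have "Y \<in> {u, v, X}"
    using hesse_line[OF H, of u v X] uv K dist by auto
  then show False
    using uv(1) \<open>X \<noteq> Y\<close> by auto
qed

lemma hesse_std_parameters:
  assumes H: "hesse_config S"
    and S: "S = set [proj 1 0 0, proj 0 1 0, proj 0 0 1, proj 1 1 1, proj 1 1 0,
      proj 1 0 s, proj 1 t 1, proj p 1 1, proj 0 1 r]"
    and distinct: "distinct [proj 1 0 0, proj 0 1 0, proj 0 0 1, proj 1 1 1, proj 1 1 0,
      proj 1 0 s, proj 1 t 1, proj p 1 1, proj 0 1 r]"
  shows "t * r = 1" "s * p = 1" "t * p = 1" "r + s = 1"
proof -
  define a b c d X where "a = proj 1 0 0" and "b = proj 0 1 0" and "c = proj 0 0 1"
    and "d = proj 1 1 1" and "X = proj 1 1 0"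
  define tac tbd tad tbc where "tac = proj 1 0 s" and "tbd = proj 1 t 1" and "tad = proj p 1 1"
    and "tbc = proj 0 1 r"
  note defs = a_def b_def c_def d_def X_def tac_def tbd_def tad_def tbc_def
  have "collinear_P2 a tbd tbc"
    by (rule hesse_fourth_line[OF H, of a b X c tac d tad]) (use distinct S in \<open>auto simp: defs collinear_proj_iff\<close>)
  then show "t * r = 1"
    by (simp add: defs collinear_proj_iff algebra_simps)
  have "collinear_P2 b tac tad"
    by (rule hesse_fourth_line[OF H, of b a X d tbd c tbc]) (use distinct S in \<open>auto simp: defs collinear_proj_iff\<close>)
  then show "s * p = 1"
    by (simp add: defs collinear_proj_iff algebra_simps)
  have "collinear_P2 c tbd tad"
    by (rule hesse_fourth_line[OF H, of c d X a tac b tbc]) (use distinct S in \<open>auto simp: defs collinear_proj_iff\<close>)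
  then show "t * p = 1"
    by (simp add: defs collinear_proj_iff algebra_simps)
  have "collinear_P2 d tac tbc"
    by (rule hesse_fourth_line[OF H, of d c X b tbd a tad]) (use distinct S in \<open>auto simp: defs collinear_proj_iff\<close>)
  then show "r + s = 1"
    by (simp add: defs collinear_proj_iff algebra_simps)
qed

lemma hesse_config_eq_hesse_std:
  assumes H: "hesse_config S"
    and frame: "{proj 1 0 0, proj 0 1 0, proj 0 0 1, proj 1 1 1} \<subseteq> S"
    and diagonal: "proj 1 1 0 \<in> S" "proj 1 0 1 \<notin> S" "proj 0 1 1 \<notin> S"
  shows "\<exists>p. p\<^sup>2 - p + 1 = 0 \<and> S = frame_pt A B C ` hesse_std p"
proof -
  have in_S: "proj 1 0 0 \<in> S" "proj 0 1 0 \<in> S" "proj 0 0 1 \<in> S" "proj 1 1 1 \<in> S"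
    using frame by simp_all
  have "proj 1 0 0 \<noteq> proj 0 0 1" "proj 0 1 0 \<noteq> proj 1 1 1" "proj 1 0 0 \<noteq> proj 1 1 1"
    "proj 0 1 0 \<noteq> proj 0 0 1"
    by (simp_all add: proj_eq_iff)
  then obtain tac tbd tad tbc where
    tac: "tac \<in> S" "tac \<noteq> proj 1 0 0" "tac \<noteq> proj 0 0 1" "collinear_P2 (proj 1 0 0) (proj 0 0 1) tac" and
    tbd: "tbd \<in> S" "tbd \<noteq> proj 0 1 0" "tbd \<noteq> proj 1 1 1" "collinear_P2 (proj 0 1 0) (proj 1 1 1) tbd" and
    tad: "tad \<in> S" "tad \<noteq> proj 1 0 0" "tad \<noteq> proj 1 1 1" "collinear_P2 (proj 1 0 0) (proj 1 1 1) tad" and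
    tbc: "tbc \<in> S" "tbc \<noteq> proj 0 1 0" "tbc \<noteq> proj 0 0 1" "collinear_P2 (proj 0 1 0) (proj 0 0 1) tbc"
    using in_S by (metis hesse_third_point[OF H])
  obtain s t p r where "tac = proj 1 0 s" "tbd = proj 1 t 1" "tad = proj p 1 1" "tbc = proj 0 1 r"
    using line_ac_point[OF tac(4,3)] line_bd_point[OF tbd(4,2)] line_ad_point[OF tad(4,2)]
      line_bc_point[OF tbc(4,3)] by metis
  note params = this
  have "s \<noteq> 0" "t \<noteq> 1" "p \<noteq> 1" "r \<noteq> 0"
    using tac(2) tbd(3) tad(3) tbc(2) by (simp_all add: params proj_eq_iff)
  moreover have "s \<noteq> 1" "t \<noteq> 0" "p \<noteq> 0" "r \<noteq> 1"
    using tac(1) tbd(1) tad(1) tbc(1) diagonal(2,3) params by auto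
  ultimately have distinct: "distinct [proj 1 0 0, proj 0 1 0, proj 0 0 1, proj 1 1 1, proj 1 1 0,
      proj 1 0 s, proj 1 t 1, proj p 1 1, proj 0 1 r]"
    by (simp add: proj_eq_iff)
  have S: "S = set [proj 1 0 0, proj 0 1 0, proj 0 0 1, proj 1 1 1, proj 1 1 0,
      proj 1 0 s, proj 1 t 1, proj p 1 1, proj 0 1 r]"
    using hesse_config_eq_set[OF H _ distinct] in_S diagonal(1) tac(1) tbd(1) tad(1) tbc(1)
    by (simp add: params)
  note equations = hesse_std_parameter_equations[OF hesse_std_parameters[OF H S distinct]]
  then have "S = frame_pt A B C ` hesse_std p"
    unfolding S hesse_std_def by simp
  with equations(4) show ?thesis
    by blast
qed

end

section \<open>Eisenstein coordinates\<close>

definition zeta :: complex where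
  "zeta = Complex (1 / 2) (sqrt 3 / 2)"

lemma zeta_square: "zeta * zeta = zeta - 1"
  by (simp add: zeta_def complex_eq_iff field_simps)

text \<open>Elements \<open>m + n\<zeta>\<close> of the Eisenstein integers \<open>\<int>[\<zeta>]\<close>, with \<open>\<zeta>\<^sup>2 = \<zeta> - 1\<close>.
  All Hesse configurations through the standard frame have coordinates in \<open>\<int>[\<zeta>]\<close>,
  so their incidences are decided by integer arithmetic.\<close>
type_synonym eis = "int \<times> int"

fun eis_val :: "eis \<Rightarrow> complex" where
  "eis_val (m, n) = of_int m + of_int n * zeta"

fun eis_add :: "eis \<Rightarrow> eis \<Rightarrow> eis" where
  "eis_add (a, b) (c, d) = (a + c, b + d)"

fun eis_sub :: "eis \<Rightarrow> eis \<Rightarrow> eis" where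
  "eis_sub (a, b) (c, d) = (a - c, b - d)"

fun eis_mul :: "eis \<Rightarrow> eis \<Rightarrow> eis" where
  "eis_mul (a, b) (c, d) = (a * c - b * d, a * d + b * c + b * d)"

lemma eis_val_add: "eis_val (eis_add x y) = eis_val x + eis_val y"
  by (cases x; cases y) (simp add: algebra_simps)

lemma eis_val_sub: "eis_val (eis_sub x y) = eis_val x - eis_val y"
  by (cases x; cases y) (simp add: algebra_simps)

lemma eis_val_mul: "eis_val (eis_mul x y) = eis_val x * eis_val y"
proof (cases x; cases y)
  fix a b c d assume xy: "x = (a, b)" "y = (c, d)"
  have "eis_val x * eis_val y = of_int (a * c) + of_int (a * d + b * c) * zeta + of_int (b * d) * (zeta * zeta)"
    by (simp add: xy algebra_simps)
  also have "\<dots> = eis_val (eis_mul x y)"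
    by (simp add: xy zeta_square algebra_simps)
  finally show ?thesis by simp
qed

lemma eis_val_eq_0_iff: "eis_val x = 0 \<longleftrightarrow> x = (0, 0)"
proof (cases x)
  case (Pair m n)
  have "Re (eis_val x) = of_int m + of_int n / 2" "Im (eis_val x) = of_int n * (sqrt 3 / 2)"
    by (simp_all add: Pair zeta_def)
  then show ?thesis
    using Pair by (auto simp: complex_eq_iff)
qed

lemma eis_val_eq_iff: "eis_val x = eis_val y \<longleftrightarrow> x = y"
proof -
  have "eis_val x = eis_val y \<longleftrightarrow> eis_val (eis_sub x y) = 0"
    by (simp add: eis_val_sub del: eis_val.simps)
  also have "\<dots> \<longleftrightarrow> x = y"
    by (cases x; cases y) (simp only: eis_val_eq_0_iff eis_sub.simps, simp)
  finally show ?thesis .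
qed

type_synonym eis3 = "eis \<times> eis \<times> eis"

fun eis_vec :: "eis3 \<Rightarrow> complex^3" where
  "eis_vec (x, y, z) = vec3 (eis_val x) (eis_val y) (eis_val z)"

fun eis_det3 :: "eis3 \<Rightarrow> eis3 \<Rightarrow> eis3 \<Rightarrow> eis" where
  "eis_det3 (u1, u2, u3) (v1, v2, v3) (w1, w2, w3) =
    eis_sub (eis_add (eis_add (eis_sub (eis_sub (eis_mul u1 (eis_mul v2 w3)) (eis_mul u1 (eis_mul v3 w2)))
      (eis_mul u2 (eis_mul v1 w3))) (eis_mul u2 (eis_mul v3 w1))) (eis_mul u3 (eis_mul v1 w2)))
      (eis_mul u3 (eis_mul v2 w1))"

fun eis_proportional :: "eis3 \<Rightarrow> eis3 \<Rightarrow> bool" where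
  "eis_proportional (u1, u2, u3) (v1, v2, v3) \<longleftrightarrow>
    eis_mul u1 v2 = eis_mul u2 v1 \<and> eis_mul u1 v3 = eis_mul u3 v1 \<and> eis_mul u2 v3 = eis_mul u3 v2"

lemma det3_eis_vec: "det3 (eis_vec u) (eis_vec v) (eis_vec w) = eis_val (eis_det3 u v w)"
  by (cases u; cases v; cases w) (simp add: det3_expand eis_val_add eis_val_sub eis_val_mul del: eis_val.simps)

lemma proportional_eis_vec: "proportional (eis_vec u) (eis_vec v) \<longleftrightarrow> eis_proportional u v"
  by (cases u; cases v) (simp add: proportional_def eis_val_eq_iff[symmetric] eis_val_mul del: eis_val.simps)

lemma eis_vec_eq_0_iff: "eis_vec u = 0 \<longleftrightarrow> u = ((0, 0), (0, 0), (0, 0))"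
  by (cases u) (simp add: eis_val_eq_0_iff del: eis_val.simps)

definition eis_hesse_ok :: "eis3 list \<Rightarrow> bool" where
  "eis_hesse_ok W \<longleftrightarrow> length W = 9 \<and> distinct W \<and> (\<forall>u\<in>set W. u \<noteq> ((0, 0), (0, 0), (0, 0))) \<and>
     (\<forall>u\<in>set W. \<forall>v\<in>set W. u \<noteq> v \<longrightarrow>
        \<not> eis_proportional u v \<and> length (filter (\<lambda>w. eis_det3 u v w = (0, 0)) W) = 3)"

lemma hesse_config_eis_ok:
  assumes nondeg: "det3 A B C \<noteq> 0" and ok: "eis_hesse_ok W"
  shows "hesse_config (frame_pt A B C ` eis_vec ` set W)"
proof -
  let ?f = "\<lambda>u. frame_pt A B C (eis_vec u)"
  have nz: "eis_vec u \<noteq> 0" if "u \<in> set W" for u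
    using ok that by (auto simp: eis_hesse_ok_def eis_vec_eq_0_iff)
  have inj: "inj_on ?f (set W)"
  proof (rule inj_onI)
    fix u v assume "u \<in> set W" "v \<in> set W" "?f u = ?f v"
    then show "u = v"
      using ok frame_pt_eq_iff[OF nondeg nz nz] by (auto simp: eis_hesse_ok_def proportional_eis_vec)
  qed
  have line: "card {r \<in> ?f ` set W. collinear_P2 (?f u) (?f v) r} = 3"
    if "u \<in> set W" "v \<in> set W" "u \<noteq> v" for u v
  proof -
    have "collinear_P2 (?f u) (?f v) (?f w) \<longleftrightarrow> eis_det3 u v w = (0, 0)" if "w \<in> set W" for w
      using collinear_frame_pt_iff[OF nondeg nz nz nz] that \<open>u \<in> set W\<close> \<open>v \<in> set W\<close>
      by (simp add: det3_eis_vec eis_val_eq_0_iff)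
    then have "{r \<in> ?f ` set W. collinear_P2 (?f u) (?f v) r} = ?f ` {w \<in> set W. eis_det3 u v w = (0, 0)}"
      by blast
    also have "card \<dots> = card {w \<in> set W. eis_det3 u v w = (0, 0)}"
      by (rule card_image) (rule inj_on_subset[OF inj], blast)
    also have "\<dots> = length (filter (\<lambda>w. eis_det3 u v w = (0, 0)) W)"
      using ok distinct_card[OF distinct_filter[of W]] by (simp add: eis_hesse_ok_def set_filter)
    finally show ?thesis
      using ok that by (simp add: eis_hesse_ok_def)
  qed
  have "frame_pt A B C ` eis_vec ` set W = ?f ` set W"
    by (simp only: image_image)
  moreover have "card (?f ` set W) = 9"
    using ok card_image[OF inj] distinct_card by (fastforce simp: eis_hesse_ok_def)
  moreover have "card {r \<in> ?f ` set W. collinear_P2 P Q r} = 3"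
    if "P \<in> ?f ` set W" "Q \<in> ?f ` set W" "P \<noteq> Q" for P Q
    using that line by blast
  ultimately show ?thesis
    unfolding hesse_config_def by simp
qed

definition hesse_std_eis :: "eis \<Rightarrow> eis3 list" where
  "hesse_std_eis q = [((1, 0), (0, 0), (0, 0)), ((0, 0), (1, 0), (0, 0)), ((0, 0), (0, 0), (1, 0)),
     ((1, 0), (1, 0), (1, 0)), ((1, 0), (1, 0), (0, 0)), ((1, 0), (0, 0), eis_sub (1, 0) q),
     ((1, 0), eis_sub (1, 0) q, (1, 0)), (q, (1, 0), (1, 0)), ((0, 0), (1, 0), q)]"

lemma eis_vec_hesse_std_eis: "eis_vec ` set (hesse_std_eis q) = hesse_std (eis_val q)"
  by (simp add: hesse_std_eis_def hesse_std_def eis_val_sub del: eis_val.simps) simp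

lemma zeta_roots: "p\<^sup>2 - p + 1 = 0 \<Longrightarrow> p = eis_val (0, 1) \<or> p = eis_val (1, -1)"
proof -
  assume "p\<^sup>2 - p + 1 = 0"
  moreover have "(p - zeta) * (p - (1 - zeta)) = p\<^sup>2 - p + 1"
    using zeta_square by (simp add: power2_eq_square algebra_simps)
  ultimately show ?thesis
    by simp
qed

fun eis3_swap23 :: "eis3 \<Rightarrow> eis3" where
  "eis3_swap23 (x, y, z) = (x, z, y)"

fun eis3_rotate :: "eis3 \<Rightarrow> eis3" where
  "eis3_rotate (x, y, z) = (z, x, y)"

text \<open>The coordinate permutations \<open>eis3_swap23\<close> and \<open>eis3_rotate\<close> move the diagonal point
  \<open>[1:1:0]\<close> of \<open>hesse_std_eis q\<close> to \<open>[1:0:1]\<close> and \<open>[0:1:1]\<close>.\<close>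
definition hesse_eis_lists :: "eis3 list list" where
  "hesse_eis_lists =
    [hesse_std_eis (0, 1), hesse_std_eis (1, -1),
     map eis3_swap23 (hesse_std_eis (0, 1)), map eis3_swap23 (hesse_std_eis (1, -1)),
     map eis3_rotate (hesse_std_eis (0, 1)), map eis3_rotate (hesse_std_eis (1, -1))]"

lemma hesse_eis_lists_ok: "\<forall>W\<in>set hesse_eis_lists. eis_hesse_ok W"
  by (simp add: hesse_eis_lists_def hesse_std_eis_def eis_hesse_ok_def)

lemma hesse_eis_lists_separated:
  "\<forall>W\<in>set hesse_eis_lists. \<forall>W'\<in>set hesse_eis_lists. W \<noteq> W' \<longrightarrow>
     (\<exists>u\<in>set W. \<forall>v\<in>set W'. \<not> eis_proportional u v)"
  by code_simp

lemma length_hesse_eis_lists: "length hesse_eis_lists = 6"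
  and distinct_hesse_eis_lists: "distinct hesse_eis_lists"
  by (simp_all add: hesse_eis_lists_def hesse_std_eis_def)

lemma card_hesse_eis_configs:
  assumes nondeg: "det3 A B C \<noteq> 0"
  shows "card ((\<lambda>W. frame_pt A B C ` eis_vec ` set W) ` set hesse_eis_lists) = 6"
proof -
  have nz: "eis_vec u \<noteq> 0" if "W \<in> set hesse_eis_lists" "u \<in> set W" for W u
    using hesse_eis_lists_ok that by (auto simp: eis_hesse_ok_def eis_vec_eq_0_iff)
  have "inj_on (\<lambda>W. frame_pt A B C ` eis_vec ` set W) (set hesse_eis_lists)"
  proof (rule inj_onI, rule ccontr)
    fix W W' assume W: "W \<in> set hesse_eis_lists" "W' \<in> set hesse_eis_lists"
      and eq: "frame_pt A B C ` eis_vec ` set W = frame_pt A B C ` eis_vec ` set W'" and "W \<noteq> W'"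
    then obtain u where u: "u \<in> set W" "\<forall>v\<in>set W'. \<not> eis_proportional u v"
      using hesse_eis_lists_separated by blast
    have "frame_pt A B C (eis_vec u) \<in> frame_pt A B C ` eis_vec ` set W'"
      unfolding eq[symmetric] using u(1) by blast
    then obtain v where v: "v \<in> set W'" "frame_pt A B C (eis_vec u) = frame_pt A B C (eis_vec v)"
      by blast
    then have "proportional (eis_vec u) (eis_vec v)"
      using frame_pt_eq_iff[OF nondeg nz[OF W(1) u(1)] nz[OF W(2) v(1)]] by simp
    then show False
      using u(2) v(1) proportional_eis_vec by blast
  qed
  then have "card ((\<lambda>W. frame_pt A B C ` eis_vec ` set W) ` set hesse_eis_lists) = card (set hesse_eis_lists)"
    by (rule card_image)
  also have "\<dots> = 6"
    using distinct_card[OF distinct_hesse_eis_lists] length_hesse_eis_lists by simp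
  finally show ?thesis .
qed

lemma frame_pt_swap23_eis_vec: "frame_pt A C B (eis_vec u) = frame_pt A B C (eis_vec (eis3_swap23 u))"
  by (cases u rule: prod_cases3) (simp add: frame_pt_swap23 del: eis_val.simps)

lemma frame_pt_rotate_eis_vec: "frame_pt B C A (eis_vec u) = frame_pt A B C (eis_vec (eis3_rotate u))"
  by (cases u rule: prod_cases3) (simp add: frame_pt_rotate del: eis_val.simps)

section \<open>Counting\<close>

lemma hesse_config_through_diagonal_point:
  assumes nondeg: "det3 A B C \<noteq> 0" and H: "hesse_config S"
    and frame: "{frame_pt A B C (vec3 1 0 0), frame_pt A B C (vec3 0 1 0), frame_pt A B C (vec3 0 0 1),
      frame_pt A B C (vec3 1 1 1)} \<subseteq> S"
    and diagonal: "frame_pt A B C (vec3 1 1 0) \<in> S"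
  shows "\<exists>q\<in>{(0, 1), (1, -1)}. S = frame_pt A B C ` eis_vec ` set (hesse_std_eis q)"
proof -
  have "frame_pt A B C (vec3 1 0 1) \<notin> S"
    by (rule not_two_diagonal_points[OF nondeg H frame diagonal])
  moreover have "frame_pt A B C (vec3 0 1 1) \<notin> S"
  proof -
    have "det3 B A C \<noteq> 0"
      using nondeg by (simp add: det3_swap12[where A = A and B = B and C = C])
    moreover have "{frame_pt B A C (vec3 1 0 0), frame_pt B A C (vec3 0 1 0), frame_pt B A C (vec3 0 0 1),
        frame_pt B A C (vec3 1 1 1)} \<subseteq> S" "frame_pt B A C (vec3 1 1 0) \<in> S"
      using frame diagonal by (simp_all add: frame_pt_swap12[where A = A and B = B and C = C])
    ultimately have "frame_pt B A C (vec3 1 0 1) \<notin> S"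
      using not_two_diagonal_points H by blast
    then show ?thesis
      by (simp add: frame_pt_swap12[where A = A and B = B and C = C])
  qed
  ultimately obtain p where "p\<^sup>2 - p + 1 = 0" "S = frame_pt A B C ` hesse_std p"
    using hesse_config_eq_hesse_std[OF nondeg H frame diagonal] by blast
  then show ?thesis
    using zeta_roots[of p] eis_vec_hesse_std_eis[of "(0, 1)"] eis_vec_hesse_std_eis[of "(1, -1)"] by auto
qed

lemma hesse_config_in_hesse_eis_lists:
  assumes nondeg: "det3 A B C \<noteq> 0" and H: "hesse_config S"
    and frame: "{frame_pt A B C (vec3 1 0 0), frame_pt A B C (vec3 0 1 0), frame_pt A B C (vec3 0 0 1),
      frame_pt A B C (vec3 1 1 1)} \<subseteq> S"
  shows "S \<in> (\<lambda>W. frame_pt A B C ` eis_vec ` set W) ` set hesse_eis_lists"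
  using diagonal_point_in_hesse[OF nondeg H frame]
proof (elim disjE)
  assume "frame_pt A B C (vec3 1 1 0) \<in> S"
  then obtain q where "q \<in> {(0, 1), (1, -1)}" "S = frame_pt A B C ` eis_vec ` set (hesse_std_eis q)"
    using hesse_config_through_diagonal_point[OF nondeg H frame] by blast
  moreover have "hesse_std_eis q \<in> set hesse_eis_lists"
    using \<open>q \<in> {(0, 1), (1, -1)}\<close> by (auto simp: hesse_eis_lists_def)
  ultimately show ?thesis
    by blast
next
  assume diagonal: "frame_pt A B C (vec3 1 0 1) \<in> S"
  have nondeg': "det3 A C B \<noteq> 0"
    using nondeg by (simp add: det3_swap23[where A = A and B = B and C = C])
  have frame': "{frame_pt A C B (vec3 1 0 0), frame_pt A C B (vec3 0 1 0), frame_pt A C B (vec3 0 0 1),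
      frame_pt A C B (vec3 1 1 1)} \<subseteq> S" and diagonal': "frame_pt A C B (vec3 1 1 0) \<in> S"
    using frame diagonal by (simp_all add: frame_pt_swap23[where A = A and B = B and C = C])
  obtain q where "q \<in> {(0, 1), (1, -1)}" "S = frame_pt A C B ` eis_vec ` set (hesse_std_eis q)"
    using hesse_config_through_diagonal_point[OF nondeg' H frame' diagonal'] by blast
  then have "S = frame_pt A B C ` eis_vec ` set (map eis3_swap23 (hesse_std_eis q))"
    by (simp add: image_image frame_pt_swap23_eis_vec[where A = A and B = B and C = C])
  moreover have "map eis3_swap23 (hesse_std_eis q) \<in> set hesse_eis_lists"
    using \<open>q \<in> {(0, 1), (1, -1)}\<close> by (auto simp: hesse_eis_lists_def)
  ultimately show ?thesis
    by blast
next
  assume diagonal: "frame_pt A B C (vec3 0 1 1) \<in> S"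
  have nondeg': "det3 B C A \<noteq> 0"
    using nondeg by (simp add: det3_rotate[where A = A and B = B and C = C])
  have frame': "{frame_pt B C A (vec3 1 0 0), frame_pt B C A (vec3 0 1 0), frame_pt B C A (vec3 0 0 1),
      frame_pt B C A (vec3 1 1 1)} \<subseteq> S" and diagonal': "frame_pt B C A (vec3 1 1 0) \<in> S"
    using frame diagonal by (simp_all add: frame_pt_rotate[where A = A and B = B and C = C])
  obtain q where "q \<in> {(0, 1), (1, -1)}" "S = frame_pt B C A ` eis_vec ` set (hesse_std_eis q)"
    using hesse_config_through_diagonal_point[OF nondeg' H frame' diagonal'] by blast
  then have "S = frame_pt A B C ` eis_vec ` set (map eis3_rotate (hesse_std_eis q))"
    by (simp add: image_image frame_pt_rotate_eis_vec[where A = A and B = B and C = C])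
  moreover have "map eis3_rotate (hesse_std_eis q) \<in> set hesse_eis_lists"
    using \<open>q \<in> {(0, 1), (1, -1)}\<close> by (auto simp: hesse_eis_lists_def)
  ultimately show ?thesis
    by blast
qed

lemma hesse_configs_through_frame:
  assumes nondeg: "det3 A B C \<noteq> 0"
  shows "{S. hesse_config S \<and> {frame_pt A B C (vec3 1 0 0), frame_pt A B C (vec3 0 1 0),
      frame_pt A B C (vec3 0 0 1), frame_pt A B C (vec3 1 1 1)} \<subseteq> S}
    = (\<lambda>W. frame_pt A B C ` eis_vec ` set W) ` set hesse_eis_lists"
    (is "{S. _ \<and> ?F \<subseteq> S} = ?H")
proof (intro set_eqI iffI)
  fix S assume "S \<in> ?H"
  then obtain W where W: "W \<in> set hesse_eis_lists" "S = frame_pt A B C ` eis_vec ` set W"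
    by blast
  then have "hesse_config S"
    using hesse_config_eis_ok[OF nondeg] hesse_eis_lists_ok by blast
  moreover have "?F \<subseteq> S"
    using W by (auto simp: hesse_eis_lists_def hesse_std_eis_def)
  ultimately show "S \<in> {S. hesse_config S \<and> ?F \<subseteq> S}"
    by blast
qed (use hesse_config_in_hesse_eis_lists[OF nondeg] in blast)

theorem mainTheorem3:
  fixes a b c d :: P2
  assumes "\<not> collinear_P2 a b c" and "\<not> collinear_P2 a b d"
      and "\<not> collinear_P2 a c d" and "\<not> collinear_P2 b c d"
  shows "card {S. hesse_config S \<and> {a, b, c, d} \<subseteq> S} = 6"
proof -
  obtain A B C where nondeg: "det3 A B C \<noteq> 0"
    and "frame_pt A B C (vec3 1 0 0) = a" "frame_pt A B C (vec3 0 1 0) = b"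
    and "frame_pt A B C (vec3 0 0 1) = c" "frame_pt A B C (vec3 1 1 1) = d"
    using projective_frame_exists[OF assms] .
  then have "{S. hesse_config S \<and> {a, b, c, d} \<subseteq> S}
      = (\<lambda>W. frame_pt A B C ` eis_vec ` set W) ` set hesse_eis_lists"
    using hesse_configs_through_frame[OF nondeg] by simp
  then show ?thesis
    using card_hesse_eis_configs[OF nondeg] by simp
qed

end
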